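(* Let $n>1$ be a natural number which is either multiplicatively $e$-perfect (i.e. $T_e(n)=n^2$) or multiplicatively $e$-superperfect (i.e. $T_e(T_e(n))=n^2$). Then $n$ is $e$-harmonic of type $2$ if and only if $S_e(n)$ divides $d_e(n)$.
   Context: For $n=p_1^{a_1}\cdots p_r^{a_r}>1$ (prime factorization), a divisor $d=p_1^{b_1}\cdots p_r^{b_r}$ of $n$ is an exponential divisor ($e$-divisor) if $b_i\mid a_i$ for all $i$. $T_e(n)$ is the product of the $e$-divisors of $n$, $d_e(n)=d(a_1)\cdots d(a_r)$ is the number of $e$-divisors of $n$ (where $d(m)$ is the number of positive divisors of $m$), and $S_e(n)=\prod_{i=1}^r\left(\sum_{d_i\mid a_i}p_i^{a_i-d_i}\right)$. An integer $n$ is called $e$-harmonic of type $2$ if $S_e(n)\mid n\,d_e(n)$. *)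

theory Defs
  imports "HOL-Computational_Algebra.Primes"
begin

definition e_divisors :: "nat \<Rightarrow> nat set" where
  "e_divisors n = {d. d dvd n \<and>
      (\<forall>p\<in>prime_factors n. multiplicity p d dvd multiplicity p n)}"

definition T_e :: "nat \<Rightarrow> nat" where
  "T_e n = \<Prod>(e_divisors n)"

definition d_e :: "nat \<Rightarrow> nat" where
  "d_e n = (\<Prod>p\<in>prime_factors n. card {k. k dvd multiplicity p n})"

definition S_e :: "nat \<Rightarrow> nat" where
  "S_e n = (\<Prod>p\<in>prime_factors n.
      \<Sum>k\<in>{k. k dvd multiplicity p n}. p ^ (multiplicity p n - k))"

definition e_harmonic2 :: "nat \<Rightarrow> bool" where
  "e_harmonic2 n \<longleftrightarrow> S_e n dvd n * d_e n"

end

theory Submission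
  imports Defs "HOL-Library.FuncSet"
begin

text \<open>Write n = \<Prod> p ^ a p. The e-divisors are the products \<Prod> p ^ b p with b p dividing a p,
  so the exponent of p in T_e(n) is \<sigma>(a p) times the product of d(a r) over the primes r \<noteq> p.
  Matching these exponents (or those of T_e(T_e(n))) against the exponents 2 a p of n^2 is
  impossible once n has two distinct prime factors: the product of the d(a r) and the growth of
  \<sigma> leave too little room. So n = p^a, and then S_e(n), a sum of powers p^(a - d) over the
  divisors d of a, is congruent to 1 modulo p and hence coprime to n, which makes
  S_e(n) | n d_e(n) equivalent to S_e(n) | d_e(n).\<close>

definition divisor_sum :: "nat \<Rightarrow> nat" where
  "divisor_sum a = \<Sum>{k. k dvd a}"

definition divisor_count :: "nat \<Rightarrow> nat" where
  "divisor_count a = card {k. k dvd a}"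

lemma divisor_count_one [simp]: "divisor_count (Suc 0) = 1"
  and divisor_sum_one [simp]: "divisor_sum (Suc 0) = 1"
  by (simp_all add: divisor_count_def divisor_sum_def)

lemma divisor_count_pos:
  assumes "a > 0" shows "1 \<le> divisor_count a"
proof -
  have "{k. k dvd a} \<noteq> {}" by auto
  then show ?thesis
    using finite_divisors_nat[OF assms] by (simp add: divisor_count_def Suc_le_eq card_gt_0_iff)
qed

lemma divisor_count_ge_two:
  assumes "a \<ge> 2" shows "2 \<le> divisor_count a"
proof -
  have "card {1, a} \<le> card {k. k dvd a}"
    using assms by (intro card_mono finite_divisors_nat) auto
  then show ?thesis using assms by (simp add: divisor_count_def)
qed

lemma divisor_sum_ge:
  assumes "a > 0" shows "a \<le> divisor_sum a"
  unfolding divisor_sum_def using finite_divisors_nat[OF assms] by (intro member_le_sum) auto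

lemma divisor_sum_ge_Suc:
  assumes "a \<ge> 2" shows "a + 1 \<le> divisor_sum a"
proof -
  have "\<Sum>{1, a} \<le> \<Sum>{k. k dvd a}"
    using assms by (intro sum_mono2 finite_divisors_nat) auto
  then show ?thesis using assms by (simp add: divisor_sum_def)
qed

lemma divisor_sum_eq_Suc_if_divisor_count_two:
  assumes "divisor_count a = 2" shows "divisor_sum a = a + 1"
proof -
  have "a \<noteq> 0"
  proof
    assume "a = 0"
    then have "{k. k dvd a} = UNIV" by simp
    then show False using assms by (simp add: divisor_count_def)
  qed
  moreover have "a \<noteq> 1" using assms by (auto simp: divisor_count_def)
  ultimately have "{1, a} = {k. k dvd a}"
    using assms by (intro card_subset_eq finite_divisors_nat) (auto simp: divisor_count_def)
  then have "divisor_sum a = \<Sum>{1, a}" by (simp add: divisor_sum_def)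
  then show ?thesis using \<open>a \<noteq> 1\<close> by simp
qed

lemma divisor_count_le_prod:
  assumes "finite A" "\<And>r. r \<in> A \<Longrightarrow> a r > 0" "q \<in> A"
  shows "divisor_count (a q) \<le> (\<Prod>r\<in>A. divisor_count (a r))"
proof -
  have "1 \<le> (\<Prod>r\<in>A - {q}. divisor_count (a r))"
    using assms(2) by (intro prod_ge_1 divisor_count_pos) auto
  then show ?thesis using assms(1,3) by (simp add: prod.remove)
qed

text \<open>The exponent of p in T_e(n) for n = \<Prod>r\<in>P. r ^ a r: every divisor of a p occurs once for each
  choice of divisors of the other exponents.\<close>
definition T_e_exponent :: "(nat \<Rightarrow> nat) \<Rightarrow> nat set \<Rightarrow> nat \<Rightarrow> nat" where
  "T_e_exponent a P p = divisor_sum (a p) * (\<Prod>r\<in>P - {p}. divisor_count (a r))"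

lemma T_e_exponent_all_one:
  assumes "\<And>r. r \<in> P \<Longrightarrow> a r = 1"
  shows "T_e_exponent a P p = divisor_sum (a p)"
  unfolding T_e_exponent_def using assms by (subst prod.neutral) auto

lemma double_divisor_sum_le_T_e_exponent:
  assumes "finite P" "\<And>r. r \<in> P \<Longrightarrow> a r > 0" "q \<in> P" "q \<noteq> p" "a q \<ge> 2"
  shows "2 * divisor_sum (a p) \<le> T_e_exponent a P p"
proof -
  have "2 \<le> divisor_count (a q)" using assms(5) by (rule divisor_count_ge_two)
  also have "\<dots> \<le> (\<Prod>r\<in>P - {p}. divisor_count (a r))"
    using assms(1-4) by (intro divisor_count_le_prod) auto
  finally show ?thesis by (simp add: T_e_exponent_def)
qed

lemma divisor_sum_le_T_e_exponent:
  assumes "finite P" "\<And>r. r \<in> P \<Longrightarrow> a r > 0"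
  shows "divisor_sum (a p) \<le> T_e_exponent a P p"
proof -
  have "1 \<le> (\<Prod>r\<in>P - {p}. divisor_count (a r))"
    using assms(2) by (intro prod_ge_1 divisor_count_pos) auto
  then show ?thesis by (simp add: T_e_exponent_def)
qed

lemma T_e_exponent_pos:
  assumes "finite P" "\<And>r. r \<in> P \<Longrightarrow> a r > 0" "p \<in> P"
  shows "T_e_exponent a P p > 0"
  using divisor_sum_ge[of "a p"] divisor_sum_le_T_e_exponent[of P a p] assms by fastforce

lemma T_e_exponent_cong:
  assumes "\<And>r. r \<in> P \<Longrightarrow> a r = b r" "p \<in> P"
  shows "T_e_exponent a P p = T_e_exponent b P p"
  using assms by (simp add: T_e_exponent_def)

text \<open>If some a i \<ge> 2, the factor d(a i) \<ge> 2 in the other exponents forces a j = 1 for j \<noteq> i;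
  the equation at such j then gives d(a i) = 2, so a i is prime and the exponent at i is only
  a i + 1.\<close>
lemma T_e_exponent_ne_double:
  assumes "finite P" "p \<in> P" "q \<in> P" "p \<noteq> q" and pos: "\<And>r. r \<in> P \<Longrightarrow> a r > 0"
  shows "\<exists>r\<in>P. T_e_exponent a P r \<noteq> 2 * a r"
proof (rule ccontr)
  assume "\<not> ?thesis"
  then have eq: "T_e_exponent a P r = 2 * a r" if "r \<in> P" for r using that by blast
  show False
  proof (cases "\<exists>i\<in>P. a i \<ge> 2")
    case False
    then have "a r = 1" if "r \<in> P" for r using pos[OF that] that by force
    then show False using eq[OF \<open>p \<in> P\<close>] T_e_exponent_all_one[of P a p] \<open>p \<in> P\<close> by simp
  next
    case True
    then obtain i where i: "i \<in> P" "a i \<ge> 2" by blast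
    have one: "a j = 1" if j: "j \<in> P" "j \<noteq> i" for j
    proof -
      have "2 * divisor_sum (a j) \<le> 2 * a j"
        using double_divisor_sum_le_T_e_exponent[of P a i j, OF assms(1) pos i(1) _ i(2)] j eq[OF j(1)]
        by simp
      then have "\<not> a j \<ge> 2" using divisor_sum_ge_Suc[of "a j"] by linarith
      then show ?thesis using pos[OF j(1)] by simp
    qed
    obtain j where j: "j \<in> P" "j \<noteq> i" using assms(2-4) by blast
    have "T_e_exponent a P j = divisor_count (a i)"
      using assms(1) i(1) j one by (simp add: T_e_exponent_def prod.remove[of _ i])
    then have "divisor_count (a i) = 2" using eq[OF j(1)] one[OF j] by simp
    then have "T_e_exponent a P i = a i + 1"
      using one by (simp add: T_e_exponent_def divisor_sum_eq_Suc_if_divisor_count_two)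
    then show False using eq[OF i(1)] i(2) by simp
  qed
qed

lemma T_e_exponent_iterate_ne_double:
  assumes "finite P" "p \<in> P" "q \<in> P" "p \<noteq> q" and pos: "\<And>r. r \<in> P \<Longrightarrow> a r > 0"
  shows "\<exists>r\<in>P. T_e_exponent (T_e_exponent a P) P r \<noteq> 2 * a r"
proof (rule ccontr)
  define e where "e = T_e_exponent a P"
  have e_pos: "e r > 0" if "r \<in> P" for r using T_e_exponent_pos[OF assms(1) pos that] by (simp add: e_def)
  assume "\<not> ?thesis"
  then have eq: "T_e_exponent e P r = 2 * a r" if "r \<in> P" for r using that by (auto simp: e_def)
  have one: "a x = 1" if x: "x \<in> P" for x
  proof (rule ccontr)
    assume "a x \<noteq> 1"
    then have "a x \<ge> 2" using pos[OF x] by simp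
    obtain r where r: "r \<in> P" "r \<noteq> x" using assms(2-4) by blast
    have "2 * divisor_sum (a r) \<le> e r"
      unfolding e_def using double_divisor_sum_le_T_e_exponent[of P a x r, OF assms(1) pos x _ \<open>a x \<ge> 2\<close>] r
      by simp
    then have "2 * a r \<le> e r" using divisor_sum_ge[OF pos[OF r(1)]] by linarith
    then have "2 * a r + 1 \<le> divisor_sum (e r)"
      using divisor_sum_ge_Suc[of "e r"] pos[OF r(1)] by linarith
    also have "\<dots> \<le> T_e_exponent e P r" using divisor_sum_le_T_e_exponent[OF assms(1) e_pos] .
    finally show False using eq[OF r(1)] by simp
  qed
  then have "e r = 1" if "r \<in> P" for r using T_e_exponent_all_one[of P a r] that by (simp add: e_def)
  then have "T_e_exponent e P p = 1" using T_e_exponent_all_one[of P e p] assms(2) by simp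
  then show False using eq[OF assms(2)] one[OF assms(2)] by simp
qed

lemma sum_PiE_component:
  fixes B :: "'a \<Rightarrow> nat set"
  assumes "finite P" "q \<in> P" "\<And>p. p \<in> P \<Longrightarrow> finite (B p)"
  shows "(\<Sum>f\<in>PiE P B. f q) = \<Sum>(B q) * (\<Prod>p\<in>P - {q}. card (B p))"
proof -
  have "(\<Sum>f\<in>PiE P B. f q) = (\<Sum>f\<in>PiE P B. \<Prod>p\<in>P. if p = q then f p else 1)"
    using assms(1,2) by (intro sum.cong refl) (simp add: prod.delta)
  also have "\<dots> = (\<Prod>p\<in>P. \<Sum>k\<in>B p. if p = q then k else 1)"
    by (rule prod_sum_PiE[OF assms(1,3), symmetric])
  also have "\<dots> = \<Sum>(B q) * (\<Prod>p\<in>P - {q}. card (B p))"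
    using assms(1,2) by (simp add: prod.remove)
  finally show ?thesis .
qed

lemma inj_on_prod_prime_powers:
  assumes "finite P" "\<And>p. p \<in> P \<Longrightarrow> prime (p :: nat)"
  shows "inj_on (\<lambda>f. \<Prod>p\<in>P. p ^ f p) (PiE P B)"
proof (rule inj_onI)
  fix f g assume f: "f \<in> PiE P B" and g: "g \<in> PiE P B"
    and eq: "(\<Prod>p\<in>P. p ^ f p) = (\<Prod>p\<in>P. p ^ g p)"
  show "f = g"
  proof (rule PiE_ext[OF f g])
    fix p assume "p \<in> P"
    then show "f p = g p"
      using arg_cong[OF eq, of "multiplicity p"] assms
      by (simp add: multiplicity_prod_prime_powers)
  qed
qed

lemma e_divisors_eq_image:
  assumes "n > 0"
  shows "e_divisors n = (\<lambda>f. \<Prod>p\<in>prime_factors n. p ^ f p) `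
           PiE (prime_factors n) (\<lambda>p. {k. k dvd multiplicity p n})"
    (is "_ = ?g ` ?F")
proof
  have mult_g: "multiplicity q (?g f) = (if q \<in> prime_factors n then f q else 0)"
    if "prime q" for q f
    using that by (intro multiplicity_prod_prime_powers) auto
  show "?g ` ?F \<subseteq> e_divisors n"
  proof
    fix d assume "d \<in> ?g ` ?F"
    then obtain f where f: "f \<in> ?F" and d: "d = ?g f" by auto
    have "d dvd (\<Prod>p\<in>prime_factors n. p ^ multiplicity p n)"
      unfolding d using f prime_factors_multiplicity[of n] assms
      by (intro prod_dvd_prod le_imp_power_dvd dvd_imp_le) auto
    then have "d dvd n" using prime_factorization_nat[OF assms] by simp
    moreover have "multiplicity p d dvd multiplicity p n" if "p \<in> prime_factors n" for p
      using that f mult_g[of p f] d by (auto simp: PiE_iff in_prime_factors_imp_prime)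
    ultimately show "d \<in> e_divisors n" by (simp add: e_divisors_def)
  qed
  show "e_divisors n \<subseteq> ?g ` ?F"
  proof
    fix d assume "d \<in> e_divisors n"
    then have dn: "d dvd n" and dm: "\<forall>p\<in>prime_factors n. multiplicity p d dvd multiplicity p n"
      by (auto simp: e_divisors_def)
    have "d > 0" using dn assms by (auto intro: Nat.gr0I)
    define f where "f = restrict (\<lambda>p. multiplicity p d) (prime_factors n)"
    have "d = ?g f"
    proof (rule multiplicity_eq_nat)
      fix q :: nat assume q: "prime q"
      show "multiplicity q d = multiplicity q (?g f)"
      proof (cases "q \<in> prime_factors n")
        case False
        then have "multiplicity q n = 0" using q by (simp add: prime_factors_multiplicity)
        moreover have "multiplicity q d \<le> multiplicity q n"
          using dn assms q by (intro dvd_imp_multiplicity_le) auto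
        ultimately show ?thesis using mult_g[OF q] False by simp
      qed (simp add: mult_g[OF q] f_def)
    qed (use \<open>d > 0\<close> in \<open>auto intro!: prod_pos simp: prime_gt_0_nat in_prime_factors_imp_prime\<close>)
    moreover have "f \<in> ?F" using dm by (auto simp: f_def)
    ultimately show "d \<in> ?g ` ?F" by blast
  qed
qed

lemma
  assumes "n > 0"
  shows T_e_pos: "T_e n > 0"
    and multiplicity_T_e: "prime q \<Longrightarrow> multiplicity q (T_e n) =
      (if q \<in> prime_factors n then T_e_exponent (\<lambda>p. multiplicity p n) (prime_factors n) q else 0)"
proof -
  define P where "P = prime_factors n"
  define F where "F = PiE P (\<lambda>p. {k. k dvd multiplicity p n})"
  define g where "g = (\<lambda>f. \<Prod>p\<in>P. p ^ f p)"
  have finP: "finite P" and primes: "\<And>p. p \<in> P \<Longrightarrow> prime p"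
    by (auto simp: P_def in_prime_factors_imp_prime)
  have finB: "finite {k. k dvd multiplicity p n}" if "p \<in> P" for p
    using that assms by (intro finite_divisors_nat) (simp add: P_def prime_factors_multiplicity)
  have g_pos: "g f > 0" for f
    using primes by (auto simp: g_def prime_gt_0_nat intro!: prod_pos)
  have "inj_on g F"
    unfolding g_def F_def using finP primes by (rule inj_on_prod_prime_powers)
  then have T: "T_e n = prod g F"
    using e_divisors_eq_image[OF assms] by (simp add: T_e_def F_def g_def P_def prod.reindex)
  then show "T_e n > 0" using g_pos by (simp add: prod_pos)
  assume q: "prime q"
  have "multiplicity q (T_e n) = (\<Sum>f\<in>F. multiplicity q (g f))"
  proof (unfold T, rule prime_elem_multiplicity_prod_distrib)
    show "0 \<notin> g ` F" using g_pos by (metis image_iff less_irrefl)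
    show "finite F" unfolding F_def using finP finB by (rule finite_PiE)
  qed (use q in simp)
  also have "\<dots> = (\<Sum>f\<in>F. if q \<in> P then f q else 0)"
    unfolding g_def using finP primes q by (simp add: multiplicity_prod_prime_powers)
  also have "\<dots> = (if q \<in> P then T_e_exponent (\<lambda>p. multiplicity p n) P q else 0)"
    using sum_PiE_component[OF finP _ finB, of q]
    by (simp add: F_def T_e_exponent_def divisor_sum_def divisor_count_def)
  finally show "multiplicity q (T_e n) = (if q \<in> prime_factors n
      then T_e_exponent (\<lambda>p. multiplicity p n) (prime_factors n) q else 0)"
    by (simp add: P_def)
qed

lemma prime_factors_T_e:
  assumes "n > 0"
  shows "prime_factors (T_e n) = prime_factors n"
proof (rule set_eqI)
  have exponent_pos: "T_e_exponent (\<lambda>p. multiplicity p n) (prime_factors n) q > 0"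
    if "q \<in> prime_factors n" for q
    using T_e_exponent_pos[OF finite_set_mset _ that] by (simp add: prime_factors_multiplicity)
  fix q
  show "q \<in> prime_factors (T_e n) \<longleftrightarrow> q \<in> prime_factors n"
  proof (cases "prime q")
    case True
    have "q \<in> prime_factors (T_e n) \<longleftrightarrow> 0 < multiplicity q (T_e n)"
      using True T_e_pos[OF assms] by (auto simp: in_prime_factors_iff prime_multiplicity_gt_zero_iff)
    also have "\<dots> \<longleftrightarrow> q \<in> prime_factors n"
      using exponent_pos[of q] by (simp add: multiplicity_T_e[OF assms True])
    finally show ?thesis .
  qed (auto dest: in_prime_factors_imp_prime)
qed

lemma multiplicity_T_e_T_e:
  assumes "n > 0" "q \<in> prime_factors n"
  shows "multiplicity q (T_e (T_e n)) =
    T_e_exponent (T_e_exponent (\<lambda>p. multiplicity p n) (prime_factors n)) (prime_factors n) q"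
proof -
  have prime: "prime r" if "r \<in> prime_factors n" for r
    using that by (rule in_prime_factors_imp_prime)
  have "multiplicity q (T_e (T_e n)) =
      T_e_exponent (\<lambda>p. multiplicity p (T_e n)) (prime_factors n) q"
    using assms prime[OF assms(2)] by (simp add: multiplicity_T_e T_e_pos prime_factors_T_e)
  also have "\<dots> = T_e_exponent (T_e_exponent (\<lambda>p. multiplicity p n) (prime_factors n)) (prime_factors n) q"
    using assms prime by (intro T_e_exponent_cong) (simp_all add: multiplicity_T_e)
  finally show ?thesis .
qed

lemma prime_power_if_e_perfect_or_e_superperfect:
  assumes "n > 1" and "T_e n = n ^ 2 \<or> T_e (T_e n) = n ^ 2"
  shows "\<exists>p. prime_factors n = {p}"
proof (rule ccontr)
  assume not_single: "\<nexists>p. prime_factors n = {p}"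
  define P where "P = prime_factors n"
  define a where "a = (\<lambda>p. multiplicity p n)"
  have "n > 0" using assms(1) by simp
  obtain p where p: "p \<in> P"
    using assms(1) prime_factor_nat[of n] by (auto simp: P_def in_prime_factors_iff)
  then obtain q where q: "q \<in> P" "q \<noteq> p" using not_single unfolding P_def by blast
  have pos: "a r > 0" if "r \<in> P" for r using that by (simp add: P_def a_def prime_factors_multiplicity)
  have square: "multiplicity r (n ^ 2) = 2 * a r" if "r \<in> P" for r
    using that \<open>n > 0\<close>
    by (simp add: P_def a_def prime_elem_multiplicity_power_distrib in_prime_factors_imp_prime)
  from assms(2) show False
  proof
    assume "T_e n = n ^ 2"
    obtain r where "r \<in> P" "T_e_exponent a P r \<noteq> 2 * a r"
      using T_e_exponent_ne_double[of P p q a, OF _ p q(1) q(2)[symmetric] pos]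
      by (auto simp: P_def)
    then show False
      using \<open>T_e n = n ^ 2\<close> square multiplicity_T_e[OF \<open>n > 0\<close>, of r]
      by (simp add: P_def a_def in_prime_factors_imp_prime)
  next
    assume "T_e (T_e n) = n ^ 2"
    obtain r where "r \<in> P" "T_e_exponent (T_e_exponent a P) P r \<noteq> 2 * a r"
      using T_e_exponent_iterate_ne_double[of P p q a, OF _ p q(1) q(2)[symmetric] pos]
      by (auto simp: P_def)
    then show False
      using \<open>T_e (T_e n) = n ^ 2\<close> square multiplicity_T_e_T_e[OF \<open>n > 0\<close>, of r]
      by (simp add: P_def a_def)
  qed
qed

lemma coprime_S_e_prime_power:
  assumes "prime_factors n = {p}"
  shows "coprime (S_e n) n"
proof -
  define a where "a = multiplicity p n"
  have "prime p" using assms by (metis in_prime_factors_imp_prime insertI1)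
  have "n > 0" using assms by (auto intro: Nat.gr0I)
  have "p \<in> prime_factors n" using assms by simp
  then have "a > 0" by (simp add: a_def prime_factors_multiplicity)
  have n: "n = p ^ a" using prime_factorization_nat[OF \<open>n > 0\<close>] assms by (simp add: a_def)
  have "S_e n = (\<Sum>k\<in>{k. k dvd a}. p ^ (a - k))" by (simp add: S_e_def assms a_def)
  also have "\<dots> = 1 + (\<Sum>k\<in>{k. k dvd a} - {a}. p ^ (a - k))"
    using sum.remove[OF finite_divisors_nat[OF \<open>a > 0\<close>], of a "\<lambda>k. p ^ (a - k)"] by simp
  finally have S: "S_e n = 1 + (\<Sum>k\<in>{k. k dvd a} - {a}. p ^ (a - k))" .
  have "p dvd (\<Sum>k\<in>{k. k dvd a} - {a}. p ^ (a - k))"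
  proof (rule dvd_sum)
    fix k assume k: "k \<in> {k. k dvd a} - {a}"
    then have "k < a" using \<open>a > 0\<close> by (auto dest: dvd_imp_le)
    then show "p dvd p ^ (a - k)" by (simp add: dvd_power)
  qed
  then have "p dvd S_e n \<longleftrightarrow> p dvd 1" unfolding S by (rule dvd_add_left_iff)
  then have "\<not> p dvd S_e n" using \<open>prime p\<close> by (auto simp: prime_nat_iff)
  then have "coprime (S_e n) p" using \<open>prime p\<close> by (simp add: prime_imp_coprime coprime_commute)
  then show ?thesis unfolding n by simp
qed

theorem mainTheorem2:
  fixes n :: nat
  assumes "n > 1"
    and "T_e n = n ^ 2 \<or> T_e (T_e n) = n ^ 2"
  shows "e_harmonic2 n \<longleftrightarrow> S_e n dvd d_e n"
proof -
  obtain p where "prime_factors n = {p}"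
    using prime_power_if_e_perfect_or_e_superperfect[OF assms] by blast
  then have "coprime (S_e n) n" by (rule coprime_S_e_prime_power)
  then show ?thesis by (simp add: e_harmonic2_def coprime_dvd_mult_right_iff)
qed

end
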